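(* Let $n\geq2$, $H=\{x\in\mathbb{R}^{n+1}:\sum_i x_i=0\}$, $A_n=\mathbb{Z}^{n+1}\cap H$, $\mathcal{P}$ the Voronoi region of $A_n$ in $H$ with vertex set $V_{\mathcal{P}}$, $p_H$ the orthogonal projection onto $H$, and $A_n^\#=p_H(\mathbb{Z}^{n+1})$. Let $\tilde G$ be the Cayley graph on $\frac12A_n^\#$ with generating set $\frac12V_{\mathcal{P}}$ (i.e. $x,y$ adjacent iff $x-y\in\frac12V_{\mathcal{P}}$), with graph distance $\tilde d$. Then for all $u_1,u_2\in\frac12A_n^\#$, $\tilde d(u_1,u_2)=2$ implies $\Vert u_1-u_2\Vert_{\mathcal{P}}=1$.
   Context: The Voronoi region of a lattice $\Lambda$ in a Euclidean space $E$ is $\{z\in E:\langle z-x,z-x\rangle\geq\langle z,z\rangle\ \forall x\in\Lambda\}$. $\Vert x\Vert_{\mathcal{P}}=\inf\{\lambda\geq0:x\in\lambda\mathcal{P}\}$. It is known that $V_{\mathcal{P}}=\{p_H(u):u\in\{0,1\}^{n+1}\setminus\{(0,\dots,0),(1,\dots,1)\}\}$ and that $\Vert x\Vert_{\mathcal{P}}=\max_j x_j-\min_i x_i$ for $x\in H$. *)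

theory Defs
  imports "HOL-Analysis.Analysis"
begin

text \<open>Ambient space R^(n+1) is modelled as real^'n with CARD('n) = n+1.\<close>

definition hypH :: "(real^'n) set" where
  "hypH = {x. (\<Sum>i\<in>UNIV. x $ i) = 0}"

definition latA :: "(real^'n) set" where
  "latA = {x \<in> hypH. \<forall>i. x $ i \<in> \<int>}"

definition intvecs :: "(real^'n) set" where
  "intvecs = {x. \<forall>i. x $ i \<in> \<int>}"

definition voronoiP :: "(real^'n) set" where
  "voronoiP = {z \<in> hypH. \<forall>x\<in>latA. inner (z - x) (z - x) \<ge> inner z z}"

definition vertsP :: "(real^'n) set" where
  "vertsP = {v. v extreme_point_of voronoiP}"

definition projH :: "real^'n \<Rightarrow> real^'n" where
  "projH x = x - ((\<Sum>i\<in>UNIV. x $ i) / real CARD('n)) *\<^sub>R (\<chi> i. 1)"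

definition dualA :: "(real^'n) set" where
  "dualA = projH ` intvecs"

definition halfdualA :: "(real^'n) set" where
  "halfdualA = (\<lambda>x. (1/2::real) *\<^sub>R x) ` dualA"

definition gens :: "(real^'n) set" where
  "gens = (\<lambda>x. (1/2::real) *\<^sub>R x) ` vertsP"

definition cayley_walk :: "nat \<Rightarrow> real^'n \<Rightarrow> real^'n \<Rightarrow> bool" where
  "cayley_walk k u v \<longleftrightarrow> (\<exists>w :: nat \<Rightarrow> real^'n. w 0 = u \<and> w k = v \<and>
      (\<forall>i\<le>k. w i \<in> halfdualA) \<and> (\<forall>i<k. w i - w (Suc i) \<in> gens))"

definition cayley_dist :: "real^'n \<Rightarrow> real^'n \<Rightarrow> enat" where
  "cayley_dist u v = (if \<exists>k. cayley_walk k u v then enat (LEAST k. cayley_walk k u v) else \<infinity>)"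

definition normP :: "real^'n \<Rightarrow> real" where
  "normP x = Inf {t. t \<ge> 0 \<and> x \<in> (\<lambda>y. t *\<^sub>R y) ` voronoiP}"

end

theory Submission imports Defs begin

(* A vertex of P is the projection of a nonconstant 0/1 vector, because P = {z \<in> H. z_i - z_j \<le> 1}.
   A walk of length two therefore gives u1 - u2 = 1/2 p_H(a + b) with a + b \<in> {0,1,2}^(n+1).
   If a + b takes both values 0 and 2, the coordinate spread max_i x_i - min_j x_j of u1 - u2 is
   exactly 1, and the spread is the P-norm. Otherwise a + b or a + b - 1 is itself a 0/1 vector,
   so u1 - u2 is 0 or a generator, and the distance would be 0 or 1. *)

definition cube01 :: "(real^'n) set" where
  "cube01 = {w. \<forall>i. w $ i \<in> {0, 1}}"

lemma cube01_nonconstant: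
  assumes "w \<in> cube01" "w \<notin> {0, 1}"
  obtains i j where "w $ i = 1" "w $ j = 0"
proof -
  obtain i where "w $ i \<noteq> 0" using assms(2) by (auto simp: vec_eq_iff)
  moreover obtain j where "w $ j \<noteq> 1" using assms(2) by (auto simp: vec_eq_iff)
  ultimately show thesis using assms(1) that unfolding cube01_def by blast
qed

lemma projH_nth: "projH x $ i = x $ i - (\<Sum>j\<in>UNIV. x $ j) / real CARD('n)"
  for x :: "real^'n"
  by (simp add: projH_def)

lemma projH_nth_diff: "projH x $ i - projH x $ j = x $ i - x $ j"
  for x :: "real^'n"
  by (simp add: projH_nth)

lemma projH_in_hypH: "projH x \<in> hypH"
  for x :: "real^'n"
  by (simp add: hypH_def projH_nth sum_subtractf)

lemma projH_id: "x \<in> hypH \<Longrightarrow> projH x = x"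
  for x :: "real^'n"
  by (simp add: vec_eq_iff projH_nth hypH_def)

lemma projH_add: "projH (x + y) = projH x + projH y"
  for x y :: "real^'n"
  by (simp add: vec_eq_iff projH_nth sum.distrib add_divide_distrib)

lemma projH_scaleR: "projH (r *\<^sub>R x) = r *\<^sub>R projH x"
  for x :: "real^'n"
  by (simp add: vec_eq_iff projH_nth sum_distrib_left[symmetric] algebra_simps)

lemma linear_projH: "linear (projH :: real^'n \<Rightarrow> real^'n)"
  by (rule linearI) (simp_all add: projH_add projH_scaleR)

lemma projH_eqI:
  fixes x y :: "real^'n"
  assumes "\<And>i j. x $ i - x $ j = y $ i - y $ j"
  shows "projH x = projH y"
proof -
  fix i0 :: 'n
  define d where "d = x $ i0 - y $ i0"
  have x_eq: "x $ k = y $ k + d" for k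
    using assms[of k i0] unfolding d_def by simp
  have "(\<Sum>j\<in>UNIV. x $ j) = (\<Sum>j\<in>UNIV. y $ j) + real CARD('n) * d"
    by (simp add: x_eq sum.distrib)
  then show ?thesis
    by (simp add: vec_eq_iff projH_nth x_eq add_divide_distrib)
qed

lemma projH_const: "projH (\<chi> i. c) = (0::real^'n)"
  using projH_eqI[of "\<chi> i. c" 0] by (simp add: projH_def)

lemma projH_0_1: "w \<in> {0, 1} \<Longrightarrow> projH w = (0::real^'n)"
  using projH_const[of 0] projH_const[of 1] by (auto simp flip: zero_vec_def one_vec_def)

lemma exists_min_nth:
  fixes x :: "real^'n"
  obtains k where "\<And>i. x $ k \<le> x $ i"
proof -
  have "Min (range (\<lambda>i. x $ i)) \<in> range (\<lambda>i. x $ i)"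
    by (rule Min_in) auto
  then obtain k where "x $ k = Min (range (\<lambda>i. x $ i))"
    by (metis rangeE)
  then have "x $ k \<le> x $ i" for i
    by (simp add: Min_le)
  then show thesis
    by (rule that)
qed

subsection \<open>The Voronoi region\<close>

lemma Ints_two_mult_le_power2_add:
  fixes s k :: real
  assumes "0 \<le> s" "s \<le> 1" "k \<in> \<int>"
  shows "2 * s * k \<le> k^2 + k"
proof -
  obtain z where "k = of_int z"
    using assms(3) Ints_cases by blast
  then consider "k \<ge> 1" | "k = 0" | "k \<le> -1"
    by (cases "z \<ge> 1"; cases "z \<le> -1") auto
  then show ?thesis
  proof cases
    case 1
    then have "s * k \<le> k" "k \<le> k * k"
      using assms mult_left_le_one_le by (auto simp: mult_right_mono)
    then show ?thesis by (simp add: power2_eq_square)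
  next
    case 3
    then have "s * k \<le> 0" "0 \<le> k * (k + 1)"
      using assms by (auto simp: mult_nonneg_nonpos mult_nonpos_nonpos)
    then show ?thesis by (simp add: power2_eq_square algebra_simps)
  qed simp
qed

lemma voronoiP_nth_diff_le_1:
  fixes z :: "real^'n"
  assumes "z \<in> voronoiP"
  shows "z $ i - z $ j \<le> 1"
proof (cases "i = j")
  case False
  define x :: "real^'n" where "x = axis i 1 - axis j 1"
  have "x \<in> latA"
    using False unfolding latA_def hypH_def x_def by (auto simp: axis_def sum_subtractf)
  then have "inner z z \<le> inner (z - x) (z - x)"
    using assms unfolding voronoiP_def by auto
  then show ?thesis
    using False
    by (simp add: x_def inner_diff_left inner_diff_right inner_commute inner_axis inner_axis_axis)
      (simp add: axis_def)
qed simp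

(* As x \<in> H, z may be shifted by its minimum m without changing inner z x; afterwards
   every coordinate z_i - m lies in [0, 1]. *)
lemma two_inner_le_inner_self:
  fixes z x :: "real^'n"
  assumes z: "\<And>i j. z $ i - z $ j \<le> 1" and x: "x \<in> latA"
  shows "2 * inner z x \<le> inner x x"
proof -
  obtain k where "\<And>i. z $ k \<le> z $ i"
    using exists_min_nth by blast
  define m where "m = z $ k"
  have bounds: "0 \<le> z $ i - m" "z $ i - m \<le> 1" for i
    using \<open>z $ k \<le> z $ i\<close> z[of i k] by (auto simp: m_def)
  have x_sum: "(\<Sum>i\<in>UNIV. x $ i) = 0" and x_int: "\<And>i. x $ i \<in> \<int>"
    using x unfolding latA_def hypH_def by auto
  have "2 * inner z x = (\<Sum>i\<in>UNIV. 2 * (z $ i - m) * x $ i) + 2 * m * (\<Sum>i\<in>UNIV. x $ i)"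
    by (simp add: inner_vec_def sum_distrib_left algebra_simps sum.distrib sum_subtractf)
  also have "\<dots> = (\<Sum>i\<in>UNIV. 2 * (z $ i - m) * x $ i)"
    using x_sum by simp
  also have "\<dots> \<le> (\<Sum>i\<in>UNIV. (x $ i)^2 + x $ i)"
    by (intro sum_mono Ints_two_mult_le_power2_add bounds x_int)
  also have "\<dots> = inner x x"
    by (simp add: sum.distrib x_sum inner_vec_def power2_eq_square)
  finally show ?thesis .
qed

lemma voronoiP_iff: "z \<in> voronoiP \<longleftrightarrow> z \<in> hypH \<and> (\<forall>i j. z $ i - z $ j \<le> 1)"
  for z :: "real^'n"
proof
  show "z \<in> voronoiP" if "z \<in> hypH \<and> (\<forall>i j. z $ i - z $ j \<le> 1)"
    using two_inner_le_inner_self[of z] that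
    by (auto simp: voronoiP_def inner_diff_left inner_diff_right inner_commute)
qed (auto simp: voronoiP_def voronoiP_nth_diff_le_1)

lemma cube01_nth_diff_le_1:
  assumes "w \<in> cube01"
  shows "w $ i - w $ j \<le> 1"
proof -
  have "w $ i \<in> {0, 1}" "w $ j \<in> {0, 1}"
    using assms by (auto simp: cube01_def)
  then show ?thesis by auto
qed

lemma projH_cube01_in_voronoiP: "w \<in> cube01 \<Longrightarrow> projH w \<in> voronoiP"
  unfolding voronoiP_iff projH_nth_diff using projH_in_hypH cube01_nth_diff_le_1 by blast

subsection \<open>The norm of P is the coordinate spread\<close>

lemma normP_eq:
  fixes x :: "real^'n"
  assumes x: "x \<in> hypH" and le: "\<And>i j. x $ i - x $ j \<le> s" and eq: "x $ i0 - x $ j0 = s"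
  shows "normP x = s"
  unfolding normP_def
proof (rule cInf_eq_minimum)
  have s: "0 \<le> s"
    using eq le[of j0 i0] by simp
  have "x \<in> (\<lambda>y. s *\<^sub>R y) ` voronoiP"
  proof (cases "s = 0")
    case True
    then have "x $ i - x $ j = 0 $ i - 0 $ j" for i j
      using le[of i j] le[of j i] by simp
    then have "x = s *\<^sub>R 0"
      using x projH_eqI[of x 0] by (simp add: projH_id vec_eq_iff projH_nth)
    moreover have "0 \<in> voronoiP"
      by (simp add: voronoiP_iff hypH_def)
    ultimately show ?thesis by blast
  next
    case False
    have "(1 / s) *\<^sub>R x \<in> hypH"
      using x projH_in_hypH[of "(1 / s) *\<^sub>R x"] by (simp add: projH_scaleR projH_id)
    moreover have "((1 / s) *\<^sub>R x) $ i - ((1 / s) *\<^sub>R x) $ j \<le> 1" for i j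
      using le[of i j] s False by (simp add: field_simps flip: diff_divide_distrib)
    ultimately have "(1 / s) *\<^sub>R x \<in> voronoiP"
      by (simp add: voronoiP_iff)
    moreover have "x = s *\<^sub>R ((1 / s) *\<^sub>R x)"
      using False by simp
    ultimately show ?thesis by blast
  qed
  with s show "s \<in> {t. t \<ge> 0 \<and> x \<in> (\<lambda>y. t *\<^sub>R y) ` voronoiP}" by blast
next
  fix t assume "t \<in> {t. t \<ge> 0 \<and> x \<in> (\<lambda>y. t *\<^sub>R y) ` voronoiP}"
  then obtain y where t: "t \<ge> 0" and y: "y \<in> voronoiP" and x_eq: "x = t *\<^sub>R y" by auto
  have "s = t * (y $ i0 - y $ j0)"
    using eq x_eq by (simp add: algebra_simps)
  also have "\<dots> \<le> t"
    by (intro mult_left_le voronoiP_nth_diff_le_1[OF y] t)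
  finally show "s \<le> t" .
qed

subsection \<open>The vertices of P\<close>

lemma not_extreme_point_of_midpoint:
  assumes "a \<in> S" "b \<in> S" "a \<noteq> b"
  shows "\<not> midpoint a b extreme_point_of S"
  using assms midpoint_in_open_segment unfolding extreme_point_of_def by blast

lemma exists_other_index:
  assumes "CARD('n) \<ge> 2"
  obtains j :: 'n where "j \<noteq> i"
proof -
  have "CARD('n) \<noteq> card {i}"
    using assms by simp
  then have "UNIV \<noteq> {i}"
    by metis
  then show thesis
    using that by auto
qed

(* A coordinate strictly between the minimum and the minimum + 1 can be moved up and down within P. *)
lemma not_extreme_point_of_voronoiP:
  fixes v :: "real^'n"
  assumes N: "CARD('n) \<ge> 2" and v: "v \<in> voronoiP"
    and min: "\<And>l. v $ k \<le> v $ l" and i: "v $ k < v $ i" "v $ i < v $ k + 1"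
  shows "\<not> v extreme_point_of voronoiP"
proof -
  have vH: "v \<in> hypH" and v_diff: "\<And>k l. v $ k - v $ l \<le> 1"
    using v by (auto simp: voronoiP_iff)
  define e where "e = min (v $ i - v $ k) (v $ k + 1 - v $ i)"
  have e: "0 < e" "e \<le> v $ i - v $ k" "e \<le> v $ k + 1 - v $ i"
    using i by (auto simp: e_def)
  define d :: "real^'n" where "d = axis i e"
  have "(v + d) $ k' - (v + d) $ l \<le> 1" "(v - d) $ k' - (v - d) $ l \<le> 1" for k' l
    using min[of k'] min[of l] v_diff[of k' k] v_diff[of l k] v_diff[of k' l] e
    by (auto simp: d_def axis_def)
  then have in_P: "projH (v + d) \<in> voronoiP" "projH (v - d) \<in> voronoiP"
    by (simp_all add: voronoiP_iff projH_in_hypH projH_nth_diff)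
  obtain l where "l \<noteq> i"
    using exists_other_index[OF N] .
  then have "projH (v + d) $ i - projH (v + d) $ l \<noteq> projH (v - d) $ i - projH (v - d) $ l"
    unfolding projH_nth_diff using e(1) by (simp add: d_def axis_def)
  then have "projH (v + d) \<noteq> projH (v - d)"
    by metis
  moreover have "midpoint (projH (v + d)) (projH (v - d)) = projH (midpoint (v + d) (v - d))"
    by (simp add: midpoint_linear_image[OF linear_projH])
  then have "midpoint (projH (v + d)) (projH (v - d)) = v"
    using vH by (simp add: midpoint_def projH_id)
  ultimately show ?thesis
    using not_extreme_point_of_midpoint[OF in_P] by metis
qed

lemma vertsP_shift_cube01:
  fixes v :: "real^'n"
  assumes N: "CARD('n) \<ge> 2" and v: "v \<in> vertsP"
  obtains m where "\<And>i. v $ i - m \<in> {0, 1}"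
proof -
  have vP: "v \<in> voronoiP" and ext: "v extreme_point_of voronoiP"
    using v by (auto simp: vertsP_def extreme_point_of_def)
  obtain k where min: "\<And>l. v $ k \<le> v $ l"
    using exists_min_nth by blast
  have "v $ i - v $ k \<in> {0, 1}" for i
  proof (rule ccontr)
    assume "v $ i - v $ k \<notin> {0, 1}"
    then have "v $ k < v $ i" "v $ i < v $ k + 1"
      using min[of i] voronoiP_nth_diff_le_1[OF vP, of i k] by auto
    with not_extreme_point_of_voronoiP[OF N vP min] ext show False
      by blast
  qed
  then show thesis
    using that by blast
qed

lemma zero_notin_vertsP:
  assumes "CARD('n) \<ge> 2"
  shows "(0::real^'n) \<notin> vertsP"
proof
  fix i :: 'n
  obtain j where "j \<noteq> i"
    using exists_other_index[OF assms] .
  define p :: "real^'n" where "p = projH (axis i 1)"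
  have "axis i 1 \<in> cube01" "1 - axis i 1 \<in> cube01"
    by (auto simp: cube01_def axis_def)
  moreover have "- p = projH (1 - axis i 1)"
  proof -
    have "- p = projH (- axis i 1)"
      using projH_scaleR[of "-1" "axis i 1"] by (simp add: p_def)
    also have "\<dots> = projH (1 - axis i 1)"
      by (rule projH_eqI) simp
    finally show ?thesis .
  qed
  ultimately have "p \<in> voronoiP" "- p \<in> voronoiP"
    unfolding p_def by (simp_all add: projH_cube01_in_voronoiP)
  moreover have "p \<noteq> - p"
  proof
    assume "p = - p"
    then have "p $ i - p $ j = 0"
      by (simp add: vec_eq_iff)
    then show False
      using \<open>j \<noteq> i\<close> by (simp add: p_def projH_nth_diff axis_def)
  qed
  moreover have "midpoint p (- p) = 0"
    by (simp add: midpoint_eq_iff)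
  moreover assume "(0::real^'n) \<in> vertsP"
  ultimately show False
    using not_extreme_point_of_midpoint[of p voronoiP "- p"] by (simp add: vertsP_def)
qed

lemma vertsP_subset_projH_cube01:
  assumes "CARD('n) \<ge> 2"
  shows "vertsP \<subseteq> projH ` (cube01 - {0, 1} :: (real^'n) set)"
proof
  fix v :: "real^'n" assume v: "v \<in> vertsP"
  obtain m where m: "\<And>i. v $ i - m \<in> {0, 1}"
    using vertsP_shift_cube01[OF assms v] by blast
  define y :: "real^'n" where "y = (\<chi> k. v $ k - m)"
  have "y \<in> cube01"
    using m by (simp add: cube01_def y_def)
  moreover have "v = projH y"
  proof -
    have "v \<in> hypH"
      using v by (auto simp: vertsP_def extreme_point_of_def voronoiP_iff)
    moreover have "projH y = projH v"
      by (rule projH_eqI) (simp add: y_def)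
    ultimately show ?thesis
      by (simp add: projH_id)
  qed
  moreover have "y \<notin> {0, 1}"
  proof
    assume "y \<in> {0, 1}"
    then have "v = 0"
      using \<open>v = projH y\<close> projH_0_1 by simp
    with v zero_notin_vertsP[OF assms] show False by simp
  qed
  ultimately show "v \<in> projH ` (cube01 - {0, 1})" by blast
qed

lemma convex_comb_eq_1:
  fixes p q u :: real
  assumes "p \<le> 1" "q \<le> 1" "0 < u" "u < 1" "(1 - u) * p + u * q = 1"
  shows "p = 1" "q = 1"
proof -
  have "(1 - u) * p \<le> (1 - u) * 1" "u * q \<le> u * 1"
    using assms by (simp_all add: mult_left_le)
  then have "(1 - u) * p = (1 - u) * 1 \<and> u * q = u * 1"
    using assms(5) by argo
  with assms(3,4) show "p = 1" "q = 1"
    by simp_all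
qed

lemma voronoiP_eq_projH_cube01:
  fixes a w :: "real^'n"
  assumes a: "a \<in> voronoiP" and w: "w \<in> cube01" and i: "w $ i = 1" and j: "w $ j = 0"
    and a_diff: "\<And>k l. w $ k = 1 \<Longrightarrow> w $ l = 0 \<Longrightarrow> a $ k - a $ l = 1"
  shows "a = projH w"
proof -
  have "a $ k - a $ l = w $ k - w $ l" for k l
  proof -
    have "w $ k \<in> {0, 1}" "w $ l \<in> {0, 1}"
      using w by (auto simp: cube01_def)
    then consider "w $ k = 1" "w $ l = 1" | "w $ k = 1" "w $ l = 0" | "w $ k = 0" "w $ l = 1"
      | "w $ k = 0" "w $ l = 0"
      by blast
    then show ?thesis
    proof cases
      case 1
      then show ?thesis using a_diff[of k j] a_diff[of l j] j by simp
    next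
      case 2
      then show ?thesis using a_diff[of k l] by simp
    next
      case 3
      then show ?thesis using a_diff[of l k] by simp
    next
      case 4
      then show ?thesis using a_diff[of i k] a_diff[of i l] i by simp
    qed
  qed
  then have "projH a = projH w"
    by (rule projH_eqI)
  then show ?thesis
    using a by (simp add: voronoiP_iff projH_id)
qed

(* On an open segment in P through p_H w, every difference a_k - a_l with w_k = 1, w_l = 0 is
   at its maximum 1, so it is also 1 at both endpoints. *)
lemma projH_cube01_in_vertsP:
  assumes "w \<in> cube01 - {0, 1}"
  shows "projH w \<in> vertsP"
proof -
  obtain i j where i: "w $ i = 1" and j: "w $ j = 0"
    using assms by (auto elim: cube01_nonconstant)
  have "\<not> projH w \<in> open_segment a b" if a: "a \<in> voronoiP" and b: "b \<in> voronoiP" for a b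
  proof
    assume "projH w \<in> open_segment a b"
    then obtain u where "a \<noteq> b" "0 < u" "u < 1" and w_eq: "projH w = (1 - u) *\<^sub>R a + u *\<^sub>R b"
      by (auto simp: in_segment)
    have "a $ k - a $ l = 1 \<and> b $ k - b $ l = 1" if "w $ k = 1" "w $ l = 0" for k l
    proof -
      have "(1 - u) * (a $ k - a $ l) + u * (b $ k - b $ l) = 1"
        using projH_nth_diff[of w k l] that arg_cong[OF w_eq, of "\<lambda>x. x $ k - x $ l"]
        by (simp add: algebra_simps)
      then show ?thesis
        using convex_comb_eq_1[OF voronoiP_nth_diff_le_1[OF a] voronoiP_nth_diff_le_1[OF b]
            \<open>0 < u\<close> \<open>u < 1\<close>] by blast
    qed
    then show False
      using voronoiP_eq_projH_cube01[OF a _ i j] voronoiP_eq_projH_cube01[OF b _ i j] assms \<open>a \<noteq> b\<close>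
      by auto
  qed
  then show ?thesis
    using assms projH_cube01_in_voronoiP by (auto simp: vertsP_def extreme_point_of_def)
qed

lemma vertsP_eq:
  assumes "CARD('n) \<ge> 2"
  shows "vertsP = projH ` (cube01 - {0, 1} :: (real^'n) set)"
  using vertsP_subset_projH_cube01[OF assms] projH_cube01_in_vertsP by blast

lemma gens_eq:
  assumes "CARD('n) \<ge> 2"
  shows "gens = (\<lambda>w. (1/2) *\<^sub>R projH w) ` (cube01 - {0, 1} :: (real^'n) set)"
  unfolding gens_def vertsP_eq[OF assms] image_image ..

lemma cayley_walk_0_iff: "cayley_walk 0 u v \<longleftrightarrow> u = v \<and> u \<in> halfdualA"
  by (auto simp: cayley_walk_def)

lemma cayley_walk_1_iff:
  "cayley_walk 1 u v \<longleftrightarrow> u \<in> halfdualA \<and> v \<in> halfdualA \<and> u - v \<in> gens"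
  unfolding cayley_walk_def
  by (auto simp: le_Suc_eq intro!: exI[of _ "\<lambda>i. if i = 0 then u else v"])

lemma cayley_walk_2_imp:
  assumes "cayley_walk 2 u v"
  obtains w where "u - w \<in> gens" "w - v \<in> gens"
  using assms unfolding cayley_walk_def by (metis One_nat_def lessI numeral_2_eq_2 zero_less_Suc)

lemma cayley_dist_eq_enat_iff:
  "cayley_dist u v = enat k \<longleftrightarrow> cayley_walk k u v \<and> (\<forall>j<k. \<not> cayley_walk j u v)"
  unfolding cayley_dist_def
  by (metis (mono_tags, lifting) LeastI_ex enat.inject enat.simps(3) linorder_neqE_nat not_less_Least)

lemma cayley_dist_eq_2D:
  assumes "u \<in> halfdualA" "v \<in> halfdualA" "cayley_dist u v = 2"
  shows "u \<noteq> v" "u - v \<notin> gens" "\<exists>w. u - w \<in> gens \<and> w - v \<in> gens"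
proof -
  have walk2: "cayley_walk 2 u v" and "\<not> cayley_walk 0 u v" "\<not> cayley_walk 1 u v"
    using assms(3) cayley_dist_eq_enat_iff[of u v 2] by (auto simp: numeral_eq_enat)
  then show "u \<noteq> v" "u - v \<notin> gens"
    using assms(1,2) cayley_walk_0_iff[of u v] cayley_walk_1_iff[of u v] by auto
  show "\<exists>w. u - w \<in> gens \<and> w - v \<in> gens"
    using cayley_walk_2_imp[OF walk2] by blast
qed

lemma gens_add_gens:
  assumes "CARD('n) \<ge> 2" and "x \<in> gens" "y \<in> gens"
  obtains a b :: "real^'n" where "a \<in> cube01" "b \<in> cube01" "x + y = projH ((1/2) *\<^sub>R (a + b))"
proof -
  obtain a b where "a \<in> cube01" "b \<in> cube01" "x = (1/2) *\<^sub>R projH a" "y = (1/2) *\<^sub>R projH b"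
    using assms unfolding gens_eq[OF assms(1)] by blast
  moreover have "(1/2) *\<^sub>R projH a + (1/2) *\<^sub>R projH b = projH ((1/2) *\<^sub>R (a + b))"
    by (simp add: projH_add projH_scaleR scaleR_add_right)
  ultimately show thesis
    using that by simp
qed

lemma cube01_add_nth:
  assumes "a \<in> cube01" "b \<in> cube01"
  shows "(a + b) $ k \<in> {0, 1, 2}"
proof -
  have "a $ k \<in> {0, 1}" "b $ k \<in> {0, 1}"
    using assms by (auto simp: cube01_def)
  then show ?thesis by auto
qed

lemma cube01_add_cases:
  fixes a b :: "real^'n"
  assumes "a \<in> cube01" "b \<in> cube01"
  shows "(\<exists>i j. (a + b) $ i = 2 \<and> (a + b) $ j = 0) \<or> (\<exists>w\<in>cube01. projH w = projH (a + b))"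
proof (cases "\<exists>i. (a + b) $ i = 2")
  case True
  show ?thesis
  proof (cases "\<exists>j. (a + b) $ j = 0")
    case False
    then have "(a + b) $ k - 1 \<in> {0, 1}" for k
      using cube01_add_nth[OF assms, of k] by auto
    then have "(\<chi> k. (a + b) $ k - 1) \<in> cube01"
      by (simp add: cube01_def)
    moreover have "projH (\<chi> k. (a + b) $ k - 1) = projH (a + b)"
      by (rule projH_eqI) simp
    ultimately show ?thesis by blast
  qed (use True in blast)
next
  case False
  then have "(a + b) $ k \<in> {0, 1}" for k
    using cube01_add_nth[OF assms, of k] by auto
  then have "a + b \<in> cube01"
    by (simp add: cube01_def)
  then show ?thesis by blast
qed

lemma normP_half_projH_cube01_add:
  assumes a: "a \<in> cube01" and b: "b \<in> cube01" and ij: "(a + b) $ i = 2" "(a + b) $ j = 0"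
  shows "normP (projH ((1/2) *\<^sub>R (a + b))) = 1"
proof (rule normP_eq)
  have spread: "(a + b) $ k - (a + b) $ l \<le> 2" for k l
    using cube01_add_nth[OF a b, of k] cube01_add_nth[OF a b, of l] by auto
  show "projH ((1/2) *\<^sub>R (a + b)) $ k - projH ((1/2) *\<^sub>R (a + b)) $ l \<le> 1" for k l
    using spread[of k l] by (simp add: projH_nth_diff field_simps)
  show "projH ((1/2) *\<^sub>R (a + b)) $ i - projH ((1/2) *\<^sub>R (a + b)) $ j = 1"
    using ij by (simp add: projH_nth_diff)
qed (rule projH_in_hypH)

theorem lemma10:
  fixes u1 u2 :: "real^'n"
  assumes "CARD('n) \<ge> 3"
    and "u1 \<in> halfdualA" and "u2 \<in> halfdualA"
    and "cayley_dist u1 u2 = 2"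
  shows "normP (u1 - u2) = 1"
proof -
  have N: "CARD('n) \<ge> 2"
    using assms(1) by simp
  obtain w where "u1 - w \<in> gens" "w - u2 \<in> gens"
    using cayley_dist_eq_2D(3)[OF assms(2-4)] by blast
  then obtain a b where a: "a \<in> cube01" and b: "b \<in> cube01"
    and "(u1 - w) + (w - u2) = projH ((1/2) *\<^sub>R (a + b))"
    using gens_add_gens[OF N] by blast
  then have diff: "u1 - u2 = projH ((1/2) *\<^sub>R (a + b))"
    by simp
  from cube01_add_cases[OF a b] show ?thesis
  proof (elim disjE exE conjE bexE)
    fix i j assume "(a + b) $ i = 2" "(a + b) $ j = 0"
    then show ?thesis
      unfolding diff by (rule normP_half_projH_cube01_add[OF a b])
  next
    fix c assume c: "c \<in> cube01" "projH c = projH (a + b)"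
    then have "u1 - u2 = (1/2) *\<^sub>R projH c"
      by (simp add: diff projH_scaleR)
    then have "u1 - u2 = 0 \<or> u1 - u2 \<in> gens"
      using c(1) projH_0_1[of c] unfolding gens_eq[OF N] by auto
    with cayley_dist_eq_2D(1,2)[OF assms(2-4)] show ?thesis
      by simp
  qed
qed

end
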